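(* Let $G$ be a finite abelian group. If $B\subset G$ is an irreducible balanced set, then $|B|\geqslant\log_2(\mathrm{minspan}(B))+1$.
   Context: A set $B\subset G$ is balanced if for every $b\in B$ there exist distinct $b_1,b_2\in B$ with $2b=b_1+b_2$. A balanced set $B$ is irreducible if it does not contain two disjoint balanced subsets. For $C\subset G$, $\mathrm{minspan}(C)=\min_{g\in G}|\langle C+g\rangle|$, where $\langle X\rangle$ is the subgroup generated by $X$. *)

theory Defs
  imports Complex_Main
begin

definition is_subgroup :: "'a::ab_group_add set \<Rightarrow> bool" where
  "is_subgroup H \<longleftrightarrow> 0 \<in> H \<and> (\<forall>x\<in>H. \<forall>y\<in>H. x + y \<in> H) \<and> (\<forall>x\<in>H. - x \<in> H)"

definition gen_subgroup :: "'a::ab_group_add set \<Rightarrow> 'a set" where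
  "gen_subgroup X = \<Inter>{H. is_subgroup H \<and> X \<subseteq> H}"

definition balanced :: "'a::ab_group_add set \<Rightarrow> bool" where
  "balanced B \<longleftrightarrow> B \<noteq> {} \<and>
     (\<forall>b\<in>B. \<exists>b1\<in>B. \<exists>b2\<in>B. b1 \<noteq> b2 \<and> b + b = b1 + b2)"

definition irreducible_balanced :: "'a::ab_group_add set \<Rightarrow> bool" where
  "irreducible_balanced B \<longleftrightarrow> balanced B \<and>
     \<not> (\<exists>B1 B2. B1 \<subseteq> B \<and> B2 \<subseteq> B \<and> B1 \<inter> B2 = {} \<and> balanced B1 \<and> balanced B2)"

definition minspan :: "'a::{ab_group_add,finite} set \<Rightarrow> nat" where
  "minspan C = (LEAST n. \<exists>g. n = card (gen_subgroup ((\<lambda>c. c + g) ` C)))"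

end

theory Submission
  imports Defs "HOL-Library.Multiset"
begin

(* Fix witnesses f1, f2 with v + v = f1 v + f2 v. Irreducibility yields a root r \<in> B to which
   every element descends, so that every v \<noteq> r has a witness of strictly smaller rank.
   In a finite group every element of <B - r> is the sum of the v - r over a multiset of
   elements of B. Replacing two copies of some v \<noteq> r by f1 v and f2 v keeps that sum and
   strictly lowers the total weight 3^K - 3^(K - rank), so eventually every v \<noteq> r occurs at
   most once: <B - r> consists of subset sums of the |B| - 1 elements v - r with v \<noteq> r,
   whence minspan B \<le> 2^(|B| - 1). *)

definition balanced_by :: "('a \<Rightarrow> 'a) \<Rightarrow> ('a \<Rightarrow> 'a) \<Rightarrow> 'a::ab_group_add set \<Rightarrow> bool" where
  "balanced_by f1 f2 B \<longleftrightarrow> (\<forall>v\<in>B. f1 v \<in> B \<and> f2 v \<in> B \<and> f1 v \<noteq> f2 v \<and> v + v = f1 v + f2 v)"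

lemma balanced_obtains_balanced_by:
  assumes "balanced B"
  obtains f1 f2 where "balanced_by f1 f2 B"
proof -
  from assms have "\<forall>v\<in>B. \<exists>w. fst w \<in> B \<and> snd w \<in> B \<and> fst w \<noteq> snd w \<and> v + v = fst w + snd w"
    unfolding balanced_def by fastforce
  then obtain w where "\<forall>v\<in>B. fst (w v) \<in> B \<and> snd (w v) \<in> B \<and> fst (w v) \<noteq> snd (w v) \<and> v + v = fst (w v) + snd (w v)"
    by metis
  then show thesis
    using that[of "fst \<circ> w" "snd \<circ> w"] unfolding balanced_by_def by simp
qed

lemma balanced_by_closed_subset_balanced:
  assumes "balanced_by f1 f2 B" "S \<subseteq> B" "S \<noteq> {}" "\<forall>v\<in>S. f1 v \<in> S \<and> f2 v \<in> S"
  shows "balanced S"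
  using assms unfolding balanced_def balanced_by_def by blast

lemma funpow_plus_left: "((+) x ^^ n) y = ((+) x ^^ n) 0 + (y::'a::monoid_add)"
  by (induction n) (simp_all add: add.assoc)

lemma finite_submonoid_uminus_closed:
  fixes V :: "'a::{group_add,finite} set"
  assumes "0 \<in> V" and add: "\<And>x y. x \<in> V \<Longrightarrow> y \<in> V \<Longrightarrow> x + y \<in> V" and "x \<in> V"
  shows "- x \<in> V"
proof -
  define f where "f n = ((+) x ^^ n) 0" for n
  have f_in: "f n \<in> V" for n
    by (induction n) (simp_all add: f_def assms)
  have f_add: "f (m + n) = f m + f n" for m n
    unfolding f_def funpow_add comp_def by (rule funpow_plus_left)
  have "\<not> inj f"
    using finite_imageD[of f UNIV] by auto
  then obtain i j where "i < j" "f i = f j"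
    unfolding inj_def by (metis nat_neq_iff)
  then obtain d where "j = i + Suc d"
    using less_imp_Suc_add by fastforce
  then have "f j = f i + f (Suc d)"
    using f_add[of i "Suc d"] by simp
  with \<open>f i = f j\<close> have "f (Suc d) = 0"
    using add_left_cancel[of "f i" "f (Suc d)" 0] by simp
  then have "x + f d = 0"
    by (simp add: f_def)
  then show ?thesis
    using f_in minus_unique by metis
qed

lemma gen_subgroup_least: "is_subgroup H \<Longrightarrow> X \<subseteq> H \<Longrightarrow> gen_subgroup X \<subseteq> H"
  unfolding gen_subgroup_def by (rule Inter_lower) simp

lemma gen_subgroup_image_subset_msums:
  fixes f :: "'b \<Rightarrow> 'a::{ab_group_add,finite}"
  shows "gen_subgroup (f ` A) \<subseteq> {\<Sum>\<^sub># (image_mset f M) | M. set_mset M \<subseteq> A}"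
    (is "_ \<subseteq> ?V")
proof (rule gen_subgroup_least)
  have zero: "0 \<in> ?V"
    by (intro CollectI exI[of _ "{#}"]) simp
  have add: "x + y \<in> ?V" if "x \<in> ?V" "y \<in> ?V" for x y
  proof -
    from that obtain M N where "x = \<Sum>\<^sub># (image_mset f M)" "y = \<Sum>\<^sub># (image_mset f N)"
      "set_mset M \<subseteq> A" "set_mset N \<subseteq> A" by blast
    then show ?thesis
      by (intro CollectI exI[of _ "M + N"]) auto
  qed
  show "is_subgroup ?V"
    unfolding is_subgroup_def
    using zero add finite_submonoid_uminus_closed[of ?V] by simp
  show "f ` A \<subseteq> ?V"
  proof
    fix y assume "y \<in> f ` A"
    then obtain a where "a \<in> A" "y = f a" by blast
    then show "y \<in> ?V"
      by (intro CollectI exI[of _ "{#a#}"]) simp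
  qed
qed

lemma translated_msum_reduce_multiplicities:
  fixes B :: "'a::ab_group_add set" and W :: "'a \<Rightarrow> nat"
  assumes bal: "balanced_by f1 f2 B"
    and W: "\<And>v. v \<in> B \<Longrightarrow> v \<noteq> r \<Longrightarrow> W (f1 v) + W (f2 v) < 2 * W v"
    and "set_mset M \<subseteq> B"
  shows "\<exists>M'. set_mset M' \<subseteq> B \<and>
    \<Sum>\<^sub># (image_mset (\<lambda>v. v - r) M') = \<Sum>\<^sub># (image_mset (\<lambda>v. v - r) M) \<and>
    (\<forall>v. v \<noteq> r \<longrightarrow> count M' v \<le> 1)"
  using \<open>set_mset M \<subseteq> B\<close>
proof (induction "\<Sum>\<^sub># (image_mset W M)" arbitrary: M rule: less_induct)
  case less
  show ?case
  proof (cases "\<forall>v. v \<noteq> r \<longrightarrow> count M v \<le> 1")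
    case True
    with less.prems show ?thesis by blast
  next
    case False
    then obtain v where "v \<noteq> r" "2 \<le> count M v"
      by (auto simp: not_le)
    define M0 where "M0 = M - {#v, v#}"
    have M: "M = M0 + {#v, v#}"
      using \<open>2 \<le> count M v\<close> by (simp add: M0_def multiset_eq_iff)
    with less.prems have "v \<in> B" by auto
    define M' where "M' = M0 + {#f1 v, f2 v#}"
    have "set_mset M' \<subseteq> B"
      using less.prems bal \<open>v \<in> B\<close> unfolding M'_def M balanced_by_def by auto
    moreover have "\<Sum>\<^sub># (image_mset W M') < \<Sum>\<^sub># (image_mset W M)"
      using W[OF \<open>v \<in> B\<close> \<open>v \<noteq> r\<close>] unfolding M'_def M by simp
    ultimately obtain M'' where "set_mset M'' \<subseteq> B" "\<forall>v. v \<noteq> r \<longrightarrow> count M'' v \<le> 1"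
      "\<Sum>\<^sub># (image_mset (\<lambda>v. v - r) M'') = \<Sum>\<^sub># (image_mset (\<lambda>v. v - r) M')"
      using less.hyps by blast
    moreover have "\<Sum>\<^sub># (image_mset (\<lambda>v. v - r) M') = \<Sum>\<^sub># (image_mset (\<lambda>v. v - r) M)"
      using bal \<open>v \<in> B\<close> unfolding M'_def M balanced_by_def by (simp add: algebra_simps)
    ultimately show ?thesis
      by auto
  qed
qed

lemma translated_msum_multiplicity_le_1:
  assumes "\<And>v. v \<noteq> r \<Longrightarrow> count M v \<le> 1"
  shows "\<Sum>\<^sub># (image_mset (\<lambda>v. v - r) M) = (\<Sum>v\<in>set_mset M - {r}. v - (r::'a::ab_group_add))"
proof -
  have "{#v \<in># M. v \<noteq> r#} = mset_set (set_mset M - {r})"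
    using assms by (auto simp: multiset_eq_iff count_mset_set' le_Suc_eq) (metis count_eq_zero_iff)+
  moreover have "\<Sum>\<^sub># (image_mset (\<lambda>v. v - r) {#v \<in># M. \<not> v \<noteq> r#}) = 0"
    by (rule sum_mset.neutral) auto
  ultimately show ?thesis
    by (subst multiset_partition[of M "\<lambda>v. v \<noteq> r"]) (simp add: sum_unfold_sum_mset)
qed

lemma card_gen_subgroup_translate_le:
  fixes B :: "'a::{ab_group_add,finite} set" and W :: "'a \<Rightarrow> nat"
  assumes bal: "balanced_by f1 f2 B" and "r \<in> B"
    and W: "\<And>v. v \<in> B \<Longrightarrow> v \<noteq> r \<Longrightarrow> W (f1 v) + W (f2 v) < 2 * W v"
  shows "card (gen_subgroup ((\<lambda>v. v - r) ` B)) \<le> 2 ^ (card B - 1)"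
proof -
  have "gen_subgroup ((\<lambda>v. v - r) ` B) \<subseteq> (\<lambda>S. \<Sum>v\<in>S. v - r) ` Pow (B - {r})"
  proof
    fix y assume "y \<in> gen_subgroup ((\<lambda>v. v - r) ` B)"
    then obtain M where "set_mset M \<subseteq> B" "y = \<Sum>\<^sub># (image_mset (\<lambda>v. v - r) M)"
      using gen_subgroup_image_subset_msums by blast
    then obtain M' where "set_mset M' \<subseteq> B" "\<forall>v. v \<noteq> r \<longrightarrow> count M' v \<le> 1"
      "y = \<Sum>\<^sub># (image_mset (\<lambda>v. v - r) M')"
      using translated_msum_reduce_multiplicities[OF bal W] by metis
    then have "y = (\<Sum>v\<in>set_mset M' - {r}. v - r)" and "set_mset M' - {r} \<in> Pow (B - {r})"
      using translated_msum_multiplicity_le_1 by auto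
    then show "y \<in> (\<lambda>S. \<Sum>v\<in>S. v - r) ` Pow (B - {r})"
      by blast
  qed
  then have "card (gen_subgroup ((\<lambda>v. v - r) ` B)) \<le> card (Pow (B - {r}))"
    by (intro surj_card_le) auto
  also have "\<dots> = 2 ^ (card B - 1)"
    using \<open>r \<in> B\<close> by (simp add: card_Pow)
  finally show ?thesis .
qed

lemma irreducible_balanced_disjoint_subsets:
  assumes "irreducible_balanced B" "B1 \<subseteq> B" "B2 \<subseteq> B" "B1 \<inter> B2 = {}" "balanced B1"
  shows "\<not> balanced B2"
  using assms unfolding irreducible_balanced_def by blast

primrec descent_layer :: "('a \<Rightarrow> 'a) \<Rightarrow> ('a \<Rightarrow> 'a) \<Rightarrow> 'a set \<Rightarrow> 'a \<Rightarrow> nat \<Rightarrow> 'a set" where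
  "descent_layer f1 f2 B r 0 = {r}"
| "descent_layer f1 f2 B r (Suc k) = descent_layer f1 f2 B r k \<union>
     {v \<in> B. f1 v \<in> descent_layer f1 f2 B r k \<or> f2 v \<in> descent_layer f1 f2 B r k}"

lemma descent_complement_closed:
  assumes "balanced_by f1 f2 B" and v: "v \<in> B - (\<Union>k. descent_layer f1 f2 B r k)"
  shows "f1 v \<in> B - (\<Union>k. descent_layer f1 f2 B r k) \<and> f2 v \<in> B - (\<Union>k. descent_layer f1 f2 B r k)"
proof -
  have "f1 v \<notin> descent_layer f1 f2 B r k \<and> f2 v \<notin> descent_layer f1 f2 B r k" for k
    using v descent_layer.simps(2)[of f1 f2 B r k] by blast
  with assms show ?thesis
    unfolding balanced_by_def by blast
qed

(* The elements not descending to r form a closed set D. For r in a smallest nonempty closed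
   set C, minimality forces C \<inter> D = {}, and then C and D would be disjoint balanced sets. *)
lemma irreducible_balanced_root:
  fixes B :: "'a::ab_group_add set"
  assumes "finite B" and irr: "irreducible_balanced B" and bal: "balanced_by f1 f2 B"
  shows "\<exists>r\<in>B. \<forall>v\<in>B. \<exists>k. v \<in> descent_layer f1 f2 B r k"
proof -
  let ?closed = "\<lambda>S. S \<subseteq> B \<and> S \<noteq> {} \<and> (\<forall>v\<in>S. f1 v \<in> S \<and> f2 v \<in> S)"
  have "B \<noteq> {}"
    using irr unfolding irreducible_balanced_def balanced_def by simp
  with bal have "?closed B"
    unfolding balanced_by_def by blast
  then obtain C where C: "?closed C" and C_min: "\<And>S. ?closed S \<Longrightarrow> card C \<le> card S"
    using ex_has_least_nat[of ?closed B card] by blast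
  then obtain r where "r \<in> C" by blast
  have "finite C"
    using C \<open>finite B\<close> finite_subset by blast
  define D where "D = B - (\<Union>k. descent_layer f1 f2 B r k)"
  have "r \<notin> D"
    unfolding D_def using descent_layer.simps(1)[of f1 f2 B r] by blast
  have D_closed: "f1 v \<in> D \<and> f2 v \<in> D" if "v \<in> D" for v
    using that unfolding D_def by (rule descent_complement_closed[OF bal])
  have "D = {}"
  proof (rule ccontr)
    assume "D \<noteq> {}"
    show False
    proof (cases "C \<inter> D = {}")
      case True
      have "D \<subseteq> B"
        unfolding D_def by blast
      with C D_closed \<open>D \<noteq> {}\<close> have "balanced C" "balanced D"
        using balanced_by_closed_subset_balanced[OF bal] by auto
      with True C \<open>D \<subseteq> B\<close> show False
        using irreducible_balanced_disjoint_subsets[OF irr, of C D] by blast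
    next
      case False
      with C D_closed have "?closed (C \<inter> D)"
        by auto
      then have "C \<inter> D = C"
        using C_min \<open>finite C\<close> by (intro card_seteq) auto
      with \<open>r \<in> C\<close> \<open>r \<notin> D\<close> show False
        by blast
    qed
  qed
  with C \<open>r \<in> C\<close> show ?thesis
    unfolding D_def by blast
qed

lemma descent_rank_exists:
  assumes "\<forall>v\<in>B. \<exists>k. v \<in> descent_layer f1 f2 B r k"
  shows "\<exists>\<rho> :: 'a \<Rightarrow> nat. \<forall>v\<in>B. v \<noteq> r \<longrightarrow> \<rho> (f1 v) < \<rho> v \<or> \<rho> (f2 v) < \<rho> v"
proof (intro exI ballI impI)
  let ?\<rho> = "\<lambda>v. LEAST k. v \<in> descent_layer f1 f2 B r k"
  fix v assume "v \<in> B" "v \<noteq> r"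
  then have v_in: "v \<in> descent_layer f1 f2 B r (?\<rho> v)"
    using assms by (meson LeastI)
  with \<open>v \<noteq> r\<close> obtain j where j: "?\<rho> v = Suc j"
    by (metis descent_layer.simps(1) not0_implies_Suc singletonD)
  then have "v \<notin> descent_layer f1 f2 B r j"
    using not_less_Least[where P = "\<lambda>k. v \<in> descent_layer f1 f2 B r k"] by simp
  with v_in j have "f1 v \<in> descent_layer f1 f2 B r j \<or> f2 v \<in> descent_layer f1 f2 B r j"
    by simp
  then have "?\<rho> (f1 v) \<le> j \<or> ?\<rho> (f2 v) \<le> j"
    using Least_le by metis
  with j show "?\<rho> (f1 v) < ?\<rho> v \<or> ?\<rho> (f2 v) < ?\<rho> v"
    by auto
qed

lemma power3_weight_descent:
  fixes i j k K :: nat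
  assumes "i < k" "k \<le> K"
  shows "(3 ^ K - 3 ^ (K - i)) + (3 ^ K - 3 ^ (K - j)) < 2 * (3 ^ K - 3 ^ (K - k) :: nat)"
proof -
  have "3 * 3 ^ (K - k) = (3::nat) ^ Suc (K - k)"
    by simp
  also have "\<dots> \<le> 3 ^ (K - i)"
    using assms by (intro power_increasing) auto
  finally have "3 * 3 ^ (K - k) \<le> (3::nat) ^ (K - i)" .
  moreover have "(3::nat) ^ (K - i) \<le> 3 ^ K" "(3::nat) ^ (K - j) \<le> 3 ^ K" "0 < (3::nat) ^ (K - j)"
    by (simp_all add: power_increasing)
  moreover have "(P - a) + (P - b) < 2 * (P - c)"
    if "3 * c \<le> a" "a \<le> P" "b \<le> P" "0 < b" for P a b c :: nat
    using that by linarith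
  ultimately show ?thesis
    by blast
qed

lemma descent_weight_exists:
  fixes \<rho> :: "'a::ab_group_add \<Rightarrow> nat"
  assumes "finite B" and bal: "balanced_by f1 f2 B"
    and \<rho>: "\<forall>v\<in>B. v \<noteq> r \<longrightarrow> \<rho> (f1 v) < \<rho> v \<or> \<rho> (f2 v) < \<rho> v"
  shows "\<exists>W :: 'a \<Rightarrow> nat. \<forall>v\<in>B. v \<noteq> r \<longrightarrow> W (f1 v) + W (f2 v) < 2 * W v"
proof (intro exI ballI impI)
  define K where "K = Max (\<rho> ` B)"
  let ?W = "\<lambda>v. 3 ^ K - 3 ^ (K - \<rho> v) :: nat"
  fix v assume "v \<in> B" "v \<noteq> r"
  then have "\<rho> v \<le> K"
    using \<open>finite B\<close> unfolding K_def by simp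
  from \<rho> \<open>v \<in> B\<close> \<open>v \<noteq> r\<close> consider "\<rho> (f1 v) < \<rho> v" | "\<rho> (f2 v) < \<rho> v"
    by blast
  then show "?W (f1 v) + ?W (f2 v) < 2 * ?W v"
  proof cases
    case 1
    then show ?thesis
      by (rule power3_weight_descent[OF _ \<open>\<rho> v \<le> K\<close>])
  next
    case 2
    then show ?thesis
      using power3_weight_descent[OF 2 \<open>\<rho> v \<le> K\<close>, of "\<rho> (f1 v)"] by (metis add.commute)
  qed
qed

lemma irreducible_balanced_card_gen_subgroup_le:
  fixes B :: "'a::{ab_group_add,finite} set"
  assumes irr: "irreducible_balanced B"
  shows "\<exists>r\<in>B. card (gen_subgroup ((\<lambda>v. v - r) ` B)) \<le> 2 ^ (card B - 1)"
proof -
  have "balanced B"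
    using irr unfolding irreducible_balanced_def by simp
  then obtain f1 f2 where bal: "balanced_by f1 f2 B"
    by (rule balanced_obtains_balanced_by)
  obtain r where "r \<in> B" and reach: "\<forall>v\<in>B. \<exists>k. v \<in> descent_layer f1 f2 B r k"
    using irreducible_balanced_root[OF finite irr bal] by blast
  obtain \<rho> :: "'a \<Rightarrow> nat" where "\<forall>v\<in>B. v \<noteq> r \<longrightarrow> \<rho> (f1 v) < \<rho> v \<or> \<rho> (f2 v) < \<rho> v"
    using descent_rank_exists[OF reach] by blast
  then obtain W :: "'a \<Rightarrow> nat" where "\<forall>v\<in>B. v \<noteq> r \<longrightarrow> W (f1 v) + W (f2 v) < 2 * W v"
    using descent_weight_exists[OF finite bal] by blast
  then have "card (gen_subgroup ((\<lambda>v. v - r) ` B)) \<le> 2 ^ (card B - 1)"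
    by (intro card_gen_subgroup_translate_le[OF bal \<open>r \<in> B\<close>, where W = W]) simp
  with \<open>r \<in> B\<close> show ?thesis ..
qed

theorem corollary4p7:
  fixes B :: "'a::{ab_group_add,finite} set"
  assumes "irreducible_balanced B"
  shows "real (card B) \<ge> log 2 (real (minspan B)) + 1"
proof -
  obtain r where "r \<in> B" and card_le: "card (gen_subgroup ((\<lambda>v. v - r) ` B)) \<le> 2 ^ (card B - 1)"
    using irreducible_balanced_card_gen_subgroup_le[OF assms] by blast
  have "minspan B \<le> card (gen_subgroup ((\<lambda>c. c + - r) ` B))"
    unfolding minspan_def by (rule Least_le) blast
  with card_le have "minspan B \<le> 2 ^ (card B - 1)"
    by simp
  then have "log 2 (real (minspan B)) \<le> real (card B - 1)"
    using log2_of_power_le by (cases "minspan B = 0") (auto simp: log_def) \<comment> \<open>log 2 0 = 0\<close>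
  moreover have "card B \<ge> 1"
    using \<open>r \<in> B\<close> by (auto simp: Suc_le_eq card_gt_0_iff)
  ultimately show ?thesis
    by simp
qed

end
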